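(* Let $V$ be a finite-dimensional scalar product space and $T$ a self-adjoint operator on $V$. Let $\lambda$ be an eigenvalue of $T$, $U=T-\lambda I$, and suppose $x$ generates a cycle of generalized eigenvectors of length $p$ with eigenvalue $\lambda$ which is adapted to the scalar product with sign $\varepsilon$. Let $v_i=U^{p-i}x$ and $H=\operatorname{span}\{v_1,\dots,v_p\}$. For $0\le k\le p-1$ define the symmetric bilinear form $[y,w]_k=\langle U^k y,w\rangle$ on $H$. Then the number of zero entries in any diagonal representation of $[\cdot,\cdot]_k$ is $k$. If $\lambda\in\mathbb{R}$, then the number of negative entries in any diagonal representation of $[\cdot,\cdot]_k$ is $$\begin{cases}\lfloor\frac{(p-k)+1}{2}\rfloor&\text{if }\varepsilon=-1,\\ (p-k)-\lfloor\frac{(p-k)+1}{2}\rfloor&\text{if }\varepsilon=1.\end{cases}$$ In particular, the invariants of $[\cdot,\cdot]_k$ depend only on $p,k,\varepsilon$.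
   Context: A scalar product is a non-degenerate symmetric bilinear form $\langle\cdot,\cdot\rangle$ over $\mathbb{R}$ or $\mathbb{C}$ (bilinear in the complex case); if $V$ is real, non-real eigenvalues are handled in the complexification with the bilinear extension, while for real $\lambda$ the cycle lies in the real space $V$. $T$ is self-adjoint if $\langle Tx,y\rangle=\langle x,Ty\rangle$. $x$ generates a cycle of length $p$ if $p$ is minimal with $U^px=0$. The cycle is adapted to the scalar product with sign $\varepsilon$ if $v_1,\dots,v_p$ satisfy $\langle v_i,v_j\rangle=\varepsilon$ for $i+j=p+1$ and $0$ otherwise, where $\varepsilon\in\{\pm1\}$ if $\lambda\in\mathbb{R}$ and $\varepsilon=1$ if $\lambda\notin\mathbb{R}$. A diagonal representation of a symmetric bilinear form is a basis in which its matrix is diagonal. *)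

theory Defs
  imports "HOL-Analysis.Analysis"
begin

text \<open>Vectors of a finite-dimensional space over a field 'a are modelled as 'a^'n
  (every finite-dimensional space is of this form); scalar multiplication is (*s).\<close>

definition is_scalar_product :: "('a::field^'n \<Rightarrow> 'a^'n \<Rightarrow> 'a) \<Rightarrow> bool" where
  "is_scalar_product B \<longleftrightarrow>
     (\<forall>x x' y. B (x + x') y = B x y + B x' y) \<and>
     (\<forall>c x y. B (c *s x) y = c * B x y) \<and>
     (\<forall>x y. B x y = B y x) \<and>
     (\<forall>x. (\<forall>y. B x y = 0) \<longrightarrow> x = 0)"

definition self_adjoint :: "('a::field^'n \<Rightarrow> 'a^'n \<Rightarrow> 'a) \<Rightarrow> ('a^'n \<Rightarrow> 'a^'n) \<Rightarrow> bool" where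
  "self_adjoint B T \<longleftrightarrow> Vector_Spaces.linear (*s) (*s) T \<and> (\<forall>x y. B (T x) y = B x (T y))"

definition is_eigenvalue :: "('a::field^'n \<Rightarrow> 'a^'n) \<Rightarrow> 'a \<Rightarrow> bool" where
  "is_eigenvalue T lam \<longleftrightarrow> (\<exists>v. v \<noteq> 0 \<and> T v = lam *s v)"

definition shiftop :: "('a::field^'n \<Rightarrow> 'a^'n) \<Rightarrow> 'a \<Rightarrow> 'a^'n \<Rightarrow> 'a^'n" where
  "shiftop T lam = (\<lambda>v. T v - lam *s v)"

definition generates_cycle :: "('a::field^'n \<Rightarrow> 'a^'n) \<Rightarrow> 'a \<Rightarrow> 'a^'n \<Rightarrow> nat \<Rightarrow> bool" where
  "generates_cycle T lam x p \<longleftrightarrow>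
     (shiftop T lam ^^ p) x = 0 \<and> (\<forall>q<p. (shiftop T lam ^^ q) x \<noteq> 0)"

definition cycle_vec :: "('a::field^'n \<Rightarrow> 'a^'n) \<Rightarrow> 'a \<Rightarrow> 'a^'n \<Rightarrow> nat \<Rightarrow> nat \<Rightarrow> 'a^'n" where
  "cycle_vec T lam x p i = (shiftop T lam ^^ (p - i)) x"

definition cycle_adapted ::
  "('a::field^'n \<Rightarrow> 'a^'n \<Rightarrow> 'a) \<Rightarrow> ('a^'n \<Rightarrow> 'a^'n) \<Rightarrow> 'a \<Rightarrow> 'a^'n \<Rightarrow> nat \<Rightarrow> 'a \<Rightarrow> bool" where
  "cycle_adapted B T lam x p eps \<longleftrightarrow>
     (\<forall>i\<in>{1..p}. \<forall>j\<in>{1..p}.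
        B (cycle_vec T lam x p i) (cycle_vec T lam x p j) = (if i + j = p + 1 then eps else 0))"

definition cycle_span :: "('a::field^'n \<Rightarrow> 'a^'n) \<Rightarrow> 'a \<Rightarrow> 'a^'n \<Rightarrow> nat \<Rightarrow> ('a^'n) set" where
  "cycle_span T lam x p = vec.span (cycle_vec T lam x p ` {1..p})"

definition kform ::
  "('a::field^'n \<Rightarrow> 'a^'n \<Rightarrow> 'a) \<Rightarrow> ('a^'n \<Rightarrow> 'a^'n) \<Rightarrow> 'a \<Rightarrow> nat \<Rightarrow> 'a^'n \<Rightarrow> 'a^'n \<Rightarrow> 'a" where
  "kform B T lam k y w = B ((shiftop T lam ^^ k) y) w"

definition diagonal_rep :: "('a::field^'n \<Rightarrow> 'a^'n \<Rightarrow> 'a) \<Rightarrow> ('a^'n) set \<Rightarrow> ('a^'n) set \<Rightarrow> bool" where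
  "diagonal_rep F H D \<longleftrightarrow>
     vec.independent D \<and> vec.span D = H \<and> (\<forall>a\<in>D. \<forall>b\<in>D. a \<noteq> b \<longrightarrow> F a b = 0)"

definition zero_entries :: "('a::field^'n \<Rightarrow> 'a^'n \<Rightarrow> 'a) \<Rightarrow> ('a^'n) set \<Rightarrow> nat" where
  "zero_entries F D = card {d\<in>D. F d d = 0}"

definition neg_entries :: "(real^'n \<Rightarrow> real^'n \<Rightarrow> real) \<Rightarrow> (real^'n) set \<Rightarrow> nat" where
  "neg_entries F D = card {d\<in>D. F d d < 0}"

end

theory Submission
  imports Defs
begin

text \<open>
  In the basis \<open>v\<^sub>1, \<dots>, v\<^sub>p\<close> of \<open>H\<close>, the operator \<open>U\<^sup>k\<close> sends \<open>v\<^sub>i\<close> to \<open>v\<^bsub>i-k\<^esub>\<close>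
  (to \<open>0\<close> if \<open>i \<le> k\<close>), so adaptedness makes the Gram matrix of \<open>[\<cdot>,\<cdot>]\<^sub>k\<close> equal to
  \<open>\<epsilon>\<close> on the antidiagonal \<open>i + j = p + k + 1\<close> and \<open>0\<close> elsewhere.
  Hence \<open>v\<^sub>1, \<dots>, v\<^sub>k\<close> span the radical, while \<open>v\<^bsub>k+1\<^esub>, \<dots>, v\<^sub>p\<close> pair off as
  \<open>i \<leftrightarrow> p + k + 1 - i\<close>: the sums \<open>v\<^sub>i + v\<^bsub>p+k+1-i\<^esub>\<close> (together with the self-paired
  middle vector when \<open>p - k\<close> is odd) and the differences \<open>v\<^sub>i - v\<^bsub>p+k+1-i\<^esub>\<close> form an
  orthogonal family with \<open>\<lceil>(p-k)/2\<rceil>\<close> values of sign \<open>\<epsilon>\<close> and \<open>\<lfloor>(p-k)/2\<rfloor>\<close> of sign \<open>-\<epsilon>\<close>.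
  A dimension count in the spirit of Sylvester's law of inertia shows that such families bound
  the numbers of zero, negative and positive entries of every diagonal basis, which forces the
  stated counts.
\<close>

section \<open>Symmetric bilinear forms and diagonal bases\<close>

definition symmetric_bilinear :: "('a::field^'n \<Rightarrow> 'a^'n \<Rightarrow> 'a) \<Rightarrow> bool" where
  "symmetric_bilinear F \<longleftrightarrow>
     (\<forall>x x' y. F (x + x') y = F x y + F x' y) \<and>
     (\<forall>c x y. F (c *s x) y = c * F x y) \<and>
     (\<forall>x y. F x y = F y x)"

lemma card_independent_pair_le:
  assumes "vec.independent A" "vec.independent C" "finite D"
    and "A \<union> C \<subseteq> vec.span D" "vec.span A \<inter> vec.span C \<subseteq> {0}"
  shows "card A + card C \<le> card D"
proof -
  let ?sums = "{x + y |x y. x \<in> vec.span A \<and> y \<in> vec.span C}"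
  have "vec.span A \<inter> vec.span C = {0}"
    using assms(5) vec.span_zero by blast
  then have "card A + card C = vec.dim ?sums"
    using vec.dim_sums_Int[of "vec.span A" "vec.span C"] assms(1,2)
    by (simp add: vec.dim_eq_card_independent)
  also have "\<dots> \<le> vec.dim (vec.span D)"
  proof (intro vec.dim_subset subsetI)
    have "vec.span A \<subseteq> vec.span D" "vec.span C \<subseteq> vec.span D"
      using assms(4) vec.span_minimal[OF _ vec.subspace_span] by auto
    then show "z \<in> vec.span D" if "z \<in> ?sums" for z
      using that by (auto intro: vec.span_add)
  qed
  also have "\<dots> \<le> card D"
    using assms(3) vec.dim_le_card[OF vec.span_superset] by simp
  finally show ?thesis .
qed

lemma diagonal_repD:
  assumes "diagonal_rep F H D"
  shows "vec.independent D" "finite D" "vec.span D = H" "D \<subseteq> H"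
    "\<And>a b. a \<in> D \<Longrightarrow> b \<in> D \<Longrightarrow> a \<noteq> b \<Longrightarrow> F a b = 0"
  using assms vec.finiteI_independent vec.span_superset unfolding diagonal_rep_def by auto

lemma diagonal_rep_uminus: "diagonal_rep F H D \<Longrightarrow> diagonal_rep (\<lambda>x y. - F x y) H D"
  unfolding diagonal_rep_def by simp

context
  fixes F :: "'a::field^'n \<Rightarrow> 'a^'n \<Rightarrow> 'a"
  assumes F: "symmetric_bilinear F"
begin

lemma symmetric_bilinear_commute: "F x y = F y x"
  using F unfolding symmetric_bilinear_def by blast

lemma symmetric_bilinear_ladd: "F (x + x') y = F x y + F x' y"
  using F unfolding symmetric_bilinear_def by blast

lemma symmetric_bilinear_lscale: "F (c *s x) y = c * F x y"
  using F unfolding symmetric_bilinear_def by blast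

lemma symmetric_bilinear_radd: "F y (x + x') = F y x + F y x'"
  by (simp add: symmetric_bilinear_commute[of y] symmetric_bilinear_ladd)

lemma symmetric_bilinear_rscale: "F y (c *s x) = c * F y x"
  by (simp add: symmetric_bilinear_commute[of y] symmetric_bilinear_lscale)

lemma symmetric_bilinear_lzero: "F 0 y = 0"
  using symmetric_bilinear_lscale[of 0 0 y] by simp

lemma symmetric_bilinear_ldiff: "F (x - x') y = F x y - F x' y"
  using symmetric_bilinear_ladd[of "x - x'" x' y] by simp

lemma symmetric_bilinear_rdiff: "F y (x - x') = F y x - F y x'"
  by (simp add: symmetric_bilinear_commute[of y] symmetric_bilinear_ldiff)

lemma symmetric_bilinear_lsum: "F (\<Sum>a\<in>S. f a) y = (\<Sum>a\<in>S. F (f a) y)"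
  by (induction S rule: infinite_finite_induct)
    (auto simp: symmetric_bilinear_lzero symmetric_bilinear_ladd)

lemma symmetric_bilinear_uminus: "symmetric_bilinear (\<lambda>x y. - F x y)"
  using F unfolding symmetric_bilinear_def by auto

lemma symmetric_bilinear_lsum_single:
  assumes "finite I" "i \<in> I" "\<And>j. j \<in> I \<Longrightarrow> j \<noteq> i \<Longrightarrow> F (e j) w = 0"
  shows "F (\<Sum>j\<in>I. u j *s e j) w = u i * F (e i) w"
proof -
  have "F (\<Sum>j\<in>I. u j *s e j) w = (\<Sum>j\<in>I. if j = i then u i * F (e i) w else 0)"
    using assms(3) by (auto simp: symmetric_bilinear_lsum symmetric_bilinear_lscale intro: sum.cong)
  also have "\<dots> = u i * F (e i) w"
    using assms(1,2) by simp
  finally show ?thesis .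
qed

lemma symmetric_bilinear_span_radical:
  assumes "y \<in> vec.span A" "\<And>a. a \<in> A \<Longrightarrow> F a w = 0"
  shows "F y w = 0"
  using assms(1)
proof (rule vec.span_induct)
  show "vec.subspace {y. F y w = 0}"
    by (auto intro!: vec.subspaceI simp: symmetric_bilinear_lzero symmetric_bilinear_ladd
        symmetric_bilinear_lscale)
qed (use assms(2) in blast)

lemma separated_family_independent:
  assumes "finite I"
    and separated: "\<And>i. i \<in> I \<Longrightarrow> \<exists>w. F (e i) w \<noteq> 0 \<and> (\<forall>j\<in>I. j \<noteq> i \<longrightarrow> F (e j) w = 0)"
  shows "inj_on e I" "vec.independent (e ` I)"
proof -
  show inj: "inj_on e I"
  proof (rule inj_onI, rule ccontr)
    fix i j assume "i \<in> I" "j \<in> I" "e i = e j" "i \<noteq> j"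
    then show False using separated[of i] by metis
  qed
  show "vec.independent (e ` I)"
    unfolding vec.independent_explicit
  proof (intro conjI allI impI ballI)
    show "finite (e ` I)" using assms(1) by simp
    fix c v assume "(\<Sum>v\<in>e ` I. c v *s v) = 0" and "v \<in> e ` I"
    then obtain i where i: "i \<in> I" "v = e i" and comb: "(\<Sum>j\<in>I. c (e j) *s e j) = 0"
      using inj by (auto simp: sum.reindex)
    obtain w where w: "F (e i) w \<noteq> 0" "\<forall>j\<in>I. j \<noteq> i \<longrightarrow> F (e j) w = 0"
      using separated i(1) by blast
    have "c (e i) * F (e i) w = F (\<Sum>j\<in>I. c (e j) *s e j) w"
      using w(2) by (intro symmetric_bilinear_lsum_single[symmetric] assms(1) i(1)) auto
    then show "c v = 0" using comb w(1) i(2) by (simp add: symmetric_bilinear_lzero)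
  qed
qed

lemma orthogonal_quadratic:
  assumes "finite S" "\<And>a b. a \<in> S \<Longrightarrow> b \<in> S \<Longrightarrow> a \<noteq> b \<Longrightarrow> F a b = 0"
  shows "F (\<Sum>a\<in>S. u a *s a) (\<Sum>b\<in>S. u b *s b) = (\<Sum>a\<in>S. u a * u a * F a a)"
proof -
  have "F (\<Sum>a\<in>S. u a *s a) (\<Sum>b\<in>S. u b *s b) = (\<Sum>a\<in>S. u a * F a (\<Sum>b\<in>S. u b *s b))"
    by (simp add: symmetric_bilinear_lsum symmetric_bilinear_lscale)
  also have "\<dots> = (\<Sum>a\<in>S. u a * (u a * F a a))"
  proof (rule sum.cong[OF refl])
    fix a assume a: "a \<in> S"
    have "F a (\<Sum>b\<in>S. u b *s b) = F (\<Sum>b\<in>S. u b *s id b) a"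
      by (simp add: symmetric_bilinear_commute)
    also have "\<dots> = u a * F a a"
      using assms a by (subst symmetric_bilinear_lsum_single) auto
    finally show "u a * F a (\<Sum>b\<in>S. u b *s b) = u a * (u a * F a a)" by simp
  qed
  finally show ?thesis by (simp add: mult.assoc)
qed

lemma diagonal_rep_zero_entry_radical:
  assumes "diagonal_rep F H D" "z \<in> D" "F z z = 0" "w \<in> H"
  shows "F z w = 0"
proof -
  have "F w z = 0"
  proof (rule symmetric_bilinear_span_radical)
    show "w \<in> vec.span D" using assms(1,4) unfolding diagonal_rep_def by simp
    show "F d z = 0" if "d \<in> D" for d
      using assms(3) diagonal_repD(5)[OF assms(1) that assms(2)] by (cases "d = z") auto
  qed
  then show ?thesis by (simp add: symmetric_bilinear_commute)
qed

lemma zero_entries_ge: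
  assumes diag: "diagonal_rep F H D" and "vec.independent A" "A \<subseteq> H"
    and radical: "\<And>a w. a \<in> A \<Longrightarrow> w \<in> H \<Longrightarrow> F a w = 0"
  shows "card A \<le> zero_entries F D"
proof -
  define Z where "Z = {d\<in>D. F d d = 0}"
  define C where "C = D - Z"
  note D = diagonal_repD[OF diag]
  have "finite C" "C \<subseteq> D" using D(2) unfolding C_def by auto
  have "vec.span A \<inter> vec.span C \<subseteq> {0}"
  proof
    fix y assume y: "y \<in> vec.span A \<inter> vec.span C"
    obtain u where u: "y = (\<Sum>v\<in>C. u v *s v)"
      using y \<open>finite C\<close> vec.span_finite by auto
    have "u d = 0" if d: "d \<in> C" for d
    proof -
      have "u d * F d d = F y d"
        unfolding u using D(5) d \<open>C \<subseteq> D\<close> \<open>finite C\<close>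
        by (subst symmetric_bilinear_lsum_single[where e = id, simplified]) auto
      also have "\<dots> = 0"
        using y radical d \<open>C \<subseteq> D\<close> D(4) by (blast intro: symmetric_bilinear_span_radical)
      finally show ?thesis using d unfolding C_def Z_def by simp
    qed
    then show "y \<in> {0}" using u by simp
  qed
  moreover have "A \<union> C \<subseteq> vec.span D"
    using assms(3) \<open>C \<subseteq> D\<close> D(3,4) by blast
  ultimately have "card A + card C \<le> card D"
    using card_independent_pair_le[OF assms(2) vec.independent_mono[OF D(1) \<open>C \<subseteq> D\<close>] D(2)]
    by blast
  moreover have "card C = card D - card Z" "card Z \<le> card D"
    unfolding C_def Z_def using D(2) by (auto intro: card_Diff_subset card_mono)
  ultimately show ?thesis unfolding zero_entries_def Z_def by linarith
qed

lemma zero_entries_le: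
  assumes diag: "diagonal_rep F H D" and "finite I" "e ` I \<subseteq> H"
    and separated: "\<And>i. i \<in> I \<Longrightarrow>
      \<exists>w\<in>H. F (e i) w \<noteq> 0 \<and> (\<forall>j\<in>I. j \<noteq> i \<longrightarrow> F (e j) w = 0)"
  shows "card I + zero_entries F D \<le> card D"
proof -
  define Z where "Z = {d\<in>D. F d d = 0}"
  note D = diagonal_repD[OF diag]
  have "\<exists>w. F (e i) w \<noteq> 0 \<and> (\<forall>j\<in>I. j \<noteq> i \<longrightarrow> F (e j) w = 0)" if "i \<in> I" for i
    using separated[OF that] by blast
  then have "inj_on e I" "vec.independent (e ` I)"
    using separated_family_independent[OF \<open>finite I\<close>] by blast+
  have radical: "F z w = 0" if "z \<in> Z" "w \<in> H" for z w
    using diagonal_rep_zero_entry_radical[OF diag] that unfolding Z_def by blast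
  have "vec.span (e ` I) \<inter> vec.span Z \<subseteq> {0}"
  proof
    fix y assume y: "y \<in> vec.span (e ` I) \<inter> vec.span Z"
    obtain u where u: "y = (\<Sum>v\<in>e ` I. u v *s v)"
      using y \<open>finite I\<close> vec.span_finite[of "e ` I"] by auto
    have "u (e i) = 0" if i: "i \<in> I" for i
    proof -
      obtain w where w: "w \<in> H" "F (e i) w \<noteq> 0" "\<forall>j\<in>I. j \<noteq> i \<longrightarrow> F (e j) w = 0"
        using separated i by blast
      have "u (e i) * F (e i) w = F y w"
        unfolding u sum.reindex[OF \<open>inj_on e I\<close>] o_def
        using w(3) by (intro symmetric_bilinear_lsum_single[symmetric] \<open>finite I\<close> i) auto
      also have "\<dots> = 0"
        using y w(1) radical by (blast intro: symmetric_bilinear_span_radical)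
      finally show ?thesis using w(2) by simp
    qed
    then show "y \<in> {0}" using u by (auto intro: sum.neutral)
  qed
  then have "card (e ` I) + card Z \<le> card D"
    using \<open>vec.independent (e ` I)\<close> vec.independent_mono[OF D(1)] assms(3) D
    by (intro card_independent_pair_le) (auto simp: Z_def)
  then show ?thesis
    using card_image[OF \<open>inj_on e I\<close>] unfolding zero_entries_def Z_def by simp
qed

end

context
  fixes F :: "real^'n \<Rightarrow> real^'n \<Rightarrow> real"
  assumes F: "symmetric_bilinear F"
begin

lemma orthogonal_span_nonneg:
  assumes "finite S" "\<And>a b. a \<in> S \<Longrightarrow> b \<in> S \<Longrightarrow> a \<noteq> b \<Longrightarrow> F a b = 0"
    and "\<And>a. a \<in> S \<Longrightarrow> F a a \<ge> 0" "y \<in> vec.span S"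
  shows "F y y \<ge> 0"
proof -
  obtain u where "y = (\<Sum>a\<in>S. u a *s a)"
    using assms(1,4) vec.span_finite by auto
  then have "F y y = (\<Sum>a\<in>S. u a * u a * F a a)"
    using orthogonal_quadratic[OF F assms(1,2)] by simp
  then show ?thesis using assms(3) by (simp add: sum_nonneg)
qed

lemma orthogonal_span_pos:
  assumes "finite S" "\<And>a b. a \<in> S \<Longrightarrow> b \<in> S \<Longrightarrow> a \<noteq> b \<Longrightarrow> F a b = 0"
    and pos: "\<And>a. a \<in> S \<Longrightarrow> F a a > 0" and "y \<in> vec.span S" "y \<noteq> 0"
  shows "F y y > 0"
proof -
  obtain u where y: "y = (\<Sum>a\<in>S. u a *s a)"
    using assms(1,4) vec.span_finite by auto
  then have q: "F y y = (\<Sum>a\<in>S. u a * u a * F a a)"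
    using orthogonal_quadratic[OF F assms(1,2)] by simp
  have terms: "u a * u a * F a a \<ge> 0" if "a \<in> S" for a
    using pos[OF that] by simp
  have "F y y \<noteq> 0"
  proof
    assume "F y y = 0"
    then have zero_terms: "\<forall>a\<in>S. u a * u a * F a a = 0"
      using q terms by (simp add: sum_nonneg_eq_0_iff[OF assms(1)])
    have "u a = 0" if "a \<in> S" for a
      using zero_terms pos[OF that] that by auto
    then show False using y \<open>y \<noteq> 0\<close> by simp
  qed
  moreover have "F y y \<ge> 0"
    unfolding q using terms by (simp add: sum_nonneg)
  ultimately show ?thesis by simp
qed

end

definition negative_orthogonal_family ::
  "(real^'n \<Rightarrow> real^'n \<Rightarrow> real) \<Rightarrow> (real^'n) set \<Rightarrow> ('i \<Rightarrow> real^'n) \<Rightarrow> 'i set \<Rightarrow> bool" where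
  "negative_orthogonal_family F H e I \<longleftrightarrow> finite I \<and> e ` I \<subseteq> H \<and>
     (\<forall>i\<in>I. \<forall>j\<in>I. i \<noteq> j \<longrightarrow> F (e i) (e j) = 0) \<and> (\<forall>i\<in>I. F (e i) (e i) < 0)"

text \<open>The negative vectors and the non-negative part of the diagonal basis span subspaces
  meeting only in \<open>0\<close>.\<close>

lemma neg_entries_ge:
  fixes F :: "real^'n \<Rightarrow> real^'n \<Rightarrow> real"
  assumes F: "symmetric_bilinear F" and diag: "diagonal_rep F H D"
    and family: "negative_orthogonal_family F H e I"
  shows "card I \<le> neg_entries F D"
proof -
  define N where "N = {d\<in>D. F d d < 0}"
  define C where "C = D - N"
  note D = diagonal_repD[OF diag]
  have "finite I" "e ` I \<subseteq> H" and orth: "\<And>i j. i \<in> I \<Longrightarrow> j \<in> I \<Longrightarrow> i \<noteq> j \<Longrightarrow> F (e i) (e j) = 0"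
    and neg: "\<And>i. i \<in> I \<Longrightarrow> F (e i) (e i) < 0"
    using family unfolding negative_orthogonal_family_def by auto
  have "\<exists>w. F (e i) w \<noteq> 0 \<and> (\<forall>j\<in>I. j \<noteq> i \<longrightarrow> F (e j) w = 0)" if "i \<in> I" for i
    using that orth neg by (intro exI[of _ "e i"]) force
  then have "inj_on e I" "vec.independent (e ` I)"
    using separated_family_independent[OF F \<open>finite I\<close>] by blast+
  have "finite C" "C \<subseteq> D" using D(2) unfolding C_def by auto
  have trivial_intersection: "vec.span (e ` I) \<inter> vec.span C \<subseteq> {0}"
  proof
    fix y assume y: "y \<in> vec.span (e ` I) \<inter> vec.span C"
    have "F y y \<ge> 0"
    proof (rule orthogonal_span_nonneg[OF F \<open>finite C\<close>])
      show "F a b = 0" if "a \<in> C" "b \<in> C" "a \<noteq> b" for a b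
        using D(5) that \<open>C \<subseteq> D\<close> by blast
      show "F a a \<ge> 0" if "a \<in> C" for a
        using that unfolding C_def N_def by auto
    qed (use y in blast)
    moreover have "- F y y > 0" if "y \<noteq> 0"
    proof (rule orthogonal_span_pos[OF symmetric_bilinear_uminus[OF F]])
      show "- F a b = 0" if "a \<in> e ` I" "b \<in> e ` I" "a \<noteq> b" for a b
        using that orth by auto
      show "- F a a > 0" if "a \<in> e ` I" for a
        using that neg by auto
    qed (use y \<open>y \<noteq> 0\<close> \<open>finite I\<close> in auto)
    ultimately show "y \<in> {0}" by (cases "y = 0") auto
  qed
  have "e ` I \<union> C \<subseteq> vec.span D"
    using \<open>e ` I \<subseteq> H\<close> \<open>C \<subseteq> D\<close> D(3,4) by blast
  then have "card (e ` I) + card C \<le> card D"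
    using card_independent_pair_le[OF \<open>vec.independent (e ` I)\<close>
        vec.independent_mono[OF D(1) \<open>C \<subseteq> D\<close>] D(2) _ trivial_intersection] by blast
  moreover have "card C = card D - card N" "card N \<le> card D"
    unfolding C_def N_def using D(2) by (auto intro: card_Diff_subset card_mono)
  ultimately show ?thesis
    using card_image[OF \<open>inj_on e I\<close>] unfolding neg_entries_def N_def by linarith
qed

lemma neg_entries_eq:
  fixes F :: "real^'n \<Rightarrow> real^'n \<Rightarrow> real"
  assumes F: "symmetric_bilinear F" and diag: "diagonal_rep F H D"
    and "negative_orthogonal_family F H e I"
    and "negative_orthogonal_family (\<lambda>x y. - F x y) H f J"
    and "card I + card J + zero_entries F D = card D"
  shows "neg_entries F D = card I"
proof -
  have "card I \<le> neg_entries F D"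
    using neg_entries_ge[OF F diag] assms(3) .
  moreover have "card J \<le> card {d\<in>D. F d d > 0}"
    using neg_entries_ge[OF symmetric_bilinear_uminus[OF F] diagonal_rep_uminus[OF diag] assms(4)]
    unfolding neg_entries_def by simp
  moreover have "neg_entries F D + card {d\<in>D. F d d > 0} + zero_entries F D = card D"
  proof -
    let ?N = "{d\<in>D. F d d < 0}" and ?P = "{d\<in>D. F d d > 0}" and ?Z = "{d\<in>D. F d d = 0}"
    have "finite D" using diagonal_repD(2)[OF diag] .
    have "card (?N \<union> ?P) = card ?N + card ?P"
      using \<open>finite D\<close> by (intro card_Un_disjoint) auto
    moreover have "card (?N \<union> ?P \<union> ?Z) = card (?N \<union> ?P) + card ?Z"
      using \<open>finite D\<close> by (intro card_Un_disjoint) auto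
    moreover have "?N \<union> ?P \<union> ?Z = D" by auto
    ultimately show ?thesis unfolding neg_entries_def zero_entries_def by simp
  qed
  ultimately show ?thesis using assms(5) by linarith
qed

section \<open>Forms with an antidiagonal Gram matrix\<close>

locale antidiagonal_gram =
  fixes F :: "'a::field^'n \<Rightarrow> 'a^'n \<Rightarrow> 'a" and V :: "nat \<Rightarrow> 'a^'n"
    and p k :: nat and eps :: 'a
  assumes symmetric_bilinear: "symmetric_bilinear F"
    and inj: "inj_on V {1..p}"
    and independent: "vec.independent (V ` {1..p})"
    and gram: "\<And>a b. a \<in> {1..p} \<Longrightarrow> b \<in> {1..p} \<Longrightarrow>
      F (V a) (V b) = (if a + b = p + k + 1 then eps else 0)"
    and eps_nonzero: "eps \<noteq> 0"
    and k_le_p: "k \<le> p"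
begin

lemma V_in_span: "i \<in> {1..p} \<Longrightarrow> V i \<in> vec.span (V ` {1..p})"
  by (intro vec.span_base imageI)

lemma card_diagonal_rep:
  assumes "diagonal_rep F (vec.span (V ` {1..p})) D"
  shows "card D = p"
proof -
  have "card D = vec.dim (vec.span D)"
    using vec.dim_eq_card_independent[OF diagonal_repD(1)[OF assms]] by simp
  also have "\<dots> = vec.dim (V ` {1..p})"
    using diagonal_repD(3)[OF assms] by simp
  also have "\<dots> = p"
    using vec.dim_eq_card_independent[OF independent] card_image[OF inj] by simp
  finally show ?thesis .
qed

lemma zero_entries_diagonal_rep:
  assumes diag: "diagonal_rep F (vec.span (V ` {1..p})) D"
  shows "zero_entries F D = k"
proof -
  have "card (V ` {1..k}) \<le> zero_entries F D"
  proof (rule zero_entries_ge[OF symmetric_bilinear diag])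
    show "vec.independent (V ` {1..k})"
      using independent by (rule vec.independent_mono) (use k_le_p in auto)
    show "V ` {1..k} \<subseteq> vec.span (V ` {1..p})"
      using V_in_span k_le_p by auto
    show "F a w = 0" if a: "a \<in> V ` {1..k}" and w: "w \<in> vec.span (V ` {1..p})" for a w
    proof -
      obtain i where i: "i \<in> {1..k}" "a = V i" using a by blast
      have "F w a = 0"
      proof (rule symmetric_bilinear_span_radical[OF symmetric_bilinear w])
        show "F b a = 0" if "b \<in> V ` {1..p}" for b
          using that i k_le_p gram by auto
      qed
      then show ?thesis by (simp add: symmetric_bilinear_commute[OF symmetric_bilinear])
    qed
  qed
  moreover have "card (V ` {1..k}) = k"
    using card_image[OF inj_on_subset[OF inj]] k_le_p by simp
  moreover have "card {k+1..p} + zero_entries F D \<le> card D"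
  proof (rule zero_entries_le[OF symmetric_bilinear diag])
    show "V ` {k+1..p} \<subseteq> vec.span (V ` {1..p})"
      using V_in_span by auto
    show "\<exists>w\<in>vec.span (V ` {1..p}). F (V i) w \<noteq> 0 \<and> (\<forall>j\<in>{k+1..p}. j \<noteq> i \<longrightarrow> F (V j) w = 0)"
      if "i \<in> {k+1..p}" for i
    proof
      have partner: "p + k + 1 - i \<in> {1..p}" using that by auto
      then show "V (p + k + 1 - i) \<in> vec.span (V ` {1..p})" by (rule V_in_span)
      show "F (V i) (V (p + k + 1 - i)) \<noteq> 0 \<and>
          (\<forall>j\<in>{k+1..p}. j \<noteq> i \<longrightarrow> F (V j) (V (p + k + 1 - i)) = 0)"
        using that gram[OF _ partner] eps_nonzero by auto
    qed
  qed simp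
  ultimately show ?thesis
    using card_diagonal_rep[OF diag] by simp
qed

text \<open>Each pair \<open>V i\<close>, \<open>V (p + k + 1 - i)\<close> spans a hyperbolic plane, diagonalised by the sum
  and the difference of the two vectors; the self-paired middle vector (for odd \<open>p - k\<close>)
  is left alone.\<close>

definition mirror_sum :: "nat \<Rightarrow> 'a^'n" where
  "mirror_sum i = (if 2 * i = p + k + 1 then V i else V i + V (p + k + 1 - i))"

definition mirror_diff :: "nat \<Rightarrow> 'a^'n" where
  "mirror_diff i = V i - V (p + k + 1 - i)"

lemma mirror_indices:
  assumes "i \<in> {Suc k..(p + k + 1) div 2}"
  shows "i \<in> {1..p}" "p + k + 1 - i \<in> {1..p}"
  using assms by auto

lemma mirror_sum_in_span:
  "i \<in> {Suc k..(p + k + 1) div 2} \<Longrightarrow> mirror_sum i \<in> vec.span (V ` {1..p})"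
  unfolding mirror_sum_def using mirror_indices V_in_span by (auto intro: vec.span_add)

lemma mirror_diff_in_span:
  "i \<in> {Suc k..(p + k) div 2} \<Longrightarrow> mirror_diff i \<in> vec.span (V ` {1..p})"
  unfolding mirror_diff_def using mirror_indices V_in_span by (auto intro: vec.span_diff)

lemma gram_mirror_pairs:
  assumes i: "i \<in> {Suc k..(p + k + 1) div 2}" and j: "j \<in> {Suc k..(p + k + 1) div 2}"
  defines "P \<equiv> p + k + 1"
  shows "F (V i) (V j) = (if i = j \<and> 2 * i = P then eps else 0)"
    and "F (V i) (V (P - j)) = (if i = j then eps else 0)"
    and "F (V (P - i)) (V j) = (if i = j then eps else 0)"
    and "F (V (P - i)) (V (P - j)) = (if i = j \<and> 2 * i = P then eps else 0)"
proof -
  note idx = mirror_indices[OF i, folded P_def] mirror_indices[OF j, folded P_def]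
  have "2 * i \<le> P" "2 * j \<le> P" "k < i" "k < j" using i j unfolding P_def by auto
  then have "(i + j = P) = (i = j \<and> 2 * i = P)" "(i + (P - j) = P) = (i = j)"
    "((P - i) + j = P) = (i = j)" "((P - i) + (P - j) = P) = (i = j \<and> 2 * i = P)"
    by arith+
  with gram[OF idx(1) idx(3)] gram[OF idx(1) idx(4)] gram[OF idx(2) idx(3)] gram[OF idx(2) idx(4)]
  show "F (V i) (V j) = (if i = j \<and> 2 * i = P then eps else 0)"
    and "F (V i) (V (P - j)) = (if i = j then eps else 0)"
    and "F (V (P - i)) (V j) = (if i = j then eps else 0)"
    and "F (V (P - i)) (V (P - j)) = (if i = j \<and> 2 * i = P then eps else 0)"
    unfolding P_def by simp_all
qed

lemma gram_mirror_sum: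
  assumes "i \<in> {Suc k..(p + k + 1) div 2}" "j \<in> {Suc k..(p + k + 1) div 2}"
  shows "F (mirror_sum i) (mirror_sum j) =
    (if i = j then (if 2 * i = p + k + 1 then eps else 2 * eps) else 0)"
  using gram_mirror_pairs[OF assms]
  by (cases "i = j") (auto simp: mirror_sum_def symmetric_bilinear_ladd[OF symmetric_bilinear]
      symmetric_bilinear_radd[OF symmetric_bilinear])

lemma gram_mirror_diff:
  assumes "i \<in> {Suc k..(p + k) div 2}" "j \<in> {Suc k..(p + k) div 2}"
  shows "F (mirror_diff i) (mirror_diff j) = (if i = j then - (2 * eps) else 0)"
proof -
  have "i \<in> {Suc k..(p + k + 1) div 2}" "j \<in> {Suc k..(p + k + 1) div 2}" "2 * i \<noteq> p + k + 1"
    using assms by auto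
  then show ?thesis
    using gram_mirror_pairs[of i j]
    by (auto simp: mirror_diff_def symmetric_bilinear_ldiff[OF symmetric_bilinear]
        symmetric_bilinear_rdiff[OF symmetric_bilinear])
qed

end

locale real_antidiagonal_gram = antidiagonal_gram F V p k eps
  for F :: "real^'n \<Rightarrow> real^'n \<Rightarrow> real" and V p k eps
begin

lemma mirror_sum_family:
  assumes "c * eps < 0"
  shows "negative_orthogonal_family (\<lambda>x y. c * F x y) (vec.span (V ` {1..p}))
    mirror_sum {Suc k..(p + k + 1) div 2}"
  unfolding negative_orthogonal_family_def
proof (intro conjI ballI impI)
  fix i j assume "i \<in> {Suc k..(p + k + 1) div 2}" "j \<in> {Suc k..(p + k + 1) div 2}"
  then show "i \<noteq> j \<Longrightarrow> c * F (mirror_sum i) (mirror_sum j) = 0"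
    and "c * F (mirror_sum i) (mirror_sum i) < 0"
    using gram_mirror_sum assms by (auto simp: mult.left_commute[of c 2] mult_less_0_iff)
qed (use mirror_sum_in_span in auto)

lemma mirror_diff_family:
  assumes "c * eps > 0"
  shows "negative_orthogonal_family (\<lambda>x y. c * F x y) (vec.span (V ` {1..p}))
    mirror_diff {Suc k..(p + k) div 2}"
  unfolding negative_orthogonal_family_def
proof (intro conjI ballI impI)
  fix i j assume "i \<in> {Suc k..(p + k) div 2}" "j \<in> {Suc k..(p + k) div 2}"
  then show "i \<noteq> j \<Longrightarrow> c * F (mirror_diff i) (mirror_diff j) = 0"
    and "c * F (mirror_diff i) (mirror_diff i) < 0"
    using gram_mirror_diff assms by (auto simp: mult.left_commute[of c 2] mult_pos_pos)
qed (use mirror_diff_in_span in auto)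

lemma neg_entries_diagonal_rep:
  assumes diag: "diagonal_rep F (vec.span (V ` {1..p})) D"
  shows "neg_entries F D = (if eps < 0 then (p - k + 1) div 2 else (p - k) - (p - k + 1) div 2)"
proof -
  let ?H = "vec.span (V ` {1..p})"
    and ?I = "{Suc k..(p + k + 1) div 2}" and ?J = "{Suc k..(p + k) div 2}"
  have cards: "card ?I + card ?J + zero_entries F D = card D"
    using zero_entries_diagonal_rep[OF diag] card_diagonal_rep[OF diag] k_le_p by simp
  show ?thesis
  proof (cases "eps < 0")
    case True
    have "negative_orthogonal_family F ?H mirror_sum ?I"
      using mirror_sum_family[of 1] True by simp
    moreover have "negative_orthogonal_family (\<lambda>x y. - F x y) ?H mirror_diff ?J"
      using mirror_diff_family[of "-1"] True by simp
    ultimately show ?thesis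
      using neg_entries_eq[OF symmetric_bilinear diag _ _ cards] True by simp
  next
    case False
    then have "eps > 0" using eps_nonzero by simp
    have "negative_orthogonal_family F ?H mirror_diff ?J"
      using mirror_diff_family[of 1] \<open>eps > 0\<close> by simp
    moreover have "negative_orthogonal_family (\<lambda>x y. - F x y) ?H mirror_sum ?I"
      using mirror_sum_family[of "-1"] \<open>eps > 0\<close> by simp
    moreover have "card ?J + card ?I + zero_entries F D = card D"
      using cards by simp
    ultimately have "neg_entries F D = card ?J"
      by (rule neg_entries_eq[OF symmetric_bilinear diag])
    then show ?thesis
      using False k_le_p by simp
  qed
qed

end

section \<open>Cycles of a self-adjoint operator\<close>

lemma symmetric_bilinear_scalar_product: "is_scalar_product B \<Longrightarrow> symmetric_bilinear B"
  unfolding is_scalar_product_def symmetric_bilinear_def by (elim conjE) (intro conjI)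

lemma linear_funpow:
  fixes U :: "'a::field^'n \<Rightarrow> 'a^'n"
  assumes "Vector_Spaces.linear (*s) (*s) U"
  shows "Vector_Spaces.linear (*s) (*s) (U ^^ j)"
proof (induction j)
  case 0
  show ?case using vec.linear_id by (simp add: id_def)
next
  case (Suc j)
  show ?case using Vector_Spaces.linear_compose[OF Suc assms] by (simp add: o_def)
qed

lemma linear_shiftop:
  "self_adjoint B T \<Longrightarrow> Vector_Spaces.linear (*s) (*s) (shiftop T lam)"
  unfolding self_adjoint_def shiftop_def
  using vec.linear_compose_sub[OF _ vec.linear_compose_scale_right[OF vec.linear_ident]] by blast

lemma self_adjoint_shiftop:
  assumes "is_scalar_product B" "self_adjoint B T"
  shows "B (shiftop T lam y) w = B y (shiftop T lam w)"
  using assms symmetric_bilinear_scalar_product[OF assms(1)]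
  unfolding self_adjoint_def shiftop_def
  by (simp add: symmetric_bilinear_ldiff symmetric_bilinear_rdiff
      symmetric_bilinear_lscale symmetric_bilinear_rscale)

lemma adjoint_funpow:
  assumes "\<And>y w. B (U y) w = B y (U w)"
  shows "B ((U ^^ j) y) w = B y ((U ^^ j) w)"
proof (induction j arbitrary: w)
  case (Suc j)
  have "B ((U ^^ Suc j) y) w = B ((U ^^ j) y) (U w)" by (simp add: assms)
  also have "\<dots> = B y ((U ^^ j) (U w))" by (rule Suc)
  also have "\<dots> = B y ((U ^^ Suc j) w)" by (simp add: funpow_swap1)
  finally show ?case .
qed simp

lemma symmetric_bilinear_kform:
  assumes "is_scalar_product B" "self_adjoint B T"
  shows "symmetric_bilinear (kform B T lam k)"
proof -
  have B: "symmetric_bilinear B" using symmetric_bilinear_scalar_product[OF assms(1)] .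
  have U: "Vector_Spaces.linear (*s) (*s) (shiftop T lam ^^ k)"
    using linear_funpow[OF linear_shiftop[OF assms(2)]] .
  have "B ((shiftop T lam ^^ k) y) w = B ((shiftop T lam ^^ k) w) y" for y w
    using adjoint_funpow[of B "shiftop T lam", OF self_adjoint_shiftop[OF assms]]
    by (simp add: symmetric_bilinear_commute[OF B])
  then show ?thesis
    unfolding symmetric_bilinear_def kform_def
    by (simp add: vec.linear_add[OF U] vec.linear_scale[OF U]
        symmetric_bilinear_ladd[OF B] symmetric_bilinear_lscale[OF B])
qed

lemma funpow_cycle_vec:
  assumes "Vector_Spaces.linear (*s) (*s) (shiftop T lam)" "(shiftop T lam ^^ p) x = 0" "i \<le> p"
  shows "(shiftop T lam ^^ j) (cycle_vec T lam x p i) =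
    (if i \<le> j then 0 else cycle_vec T lam x p (i - j))"
proof -
  let ?U = "shiftop T lam"
  have "(?U ^^ j) (cycle_vec T lam x p i) = (?U ^^ (j + (p - i))) x"
    unfolding cycle_vec_def by (simp add: funpow_add)
  also have "\<dots> = (if i \<le> j then (?U ^^ (j - i)) ((?U ^^ p) x) else (?U ^^ (p - (i - j))) x)"
  proof (cases "i \<le> j")
    case True
    then have "j + (p - i) = (j - i) + p" using assms(3) by simp
    then show ?thesis using True by (simp only: funpow_add o_apply if_True)
  next
    case False
    then have "j + (p - i) = p - (i - j)" using assms(3) by simp
    then show ?thesis using False by simp
  qed
  finally show ?thesis
    using assms(2) vec.linear_0[OF linear_funpow[OF assms(1)]] unfolding cycle_vec_def by simp
qed

lemma kform_cycle_vec:
  assumes "is_scalar_product B" "self_adjoint B T" "(shiftop T lam ^^ p) x = 0"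
    and "cycle_adapted B T lam x p eps" "a \<in> {1..p}" "b \<in> {1..p}"
  shows "kform B T lam k (cycle_vec T lam x p a) (cycle_vec T lam x p b) =
    (if a + b = p + k + 1 then eps else 0)"
proof (cases "a \<le> k")
  case True
  then show ?thesis
    using assms funpow_cycle_vec[OF linear_shiftop[OF assms(2)] assms(3)]
      symmetric_bilinear_lzero[OF symmetric_bilinear_scalar_product[OF assms(1)]]
    by (simp add: kform_def)
next
  case False
  then have "a - k \<in> {1..p}" using assms(5) by auto
  then show ?thesis
    using False assms funpow_cycle_vec[OF linear_shiftop[OF assms(2)] assms(3)]
    unfolding kform_def cycle_adapted_def by auto
qed

lemma cycle_antidiagonal_gram:
  assumes "is_scalar_product B" "self_adjoint B T" "generates_cycle T lam x p"
    and "cycle_adapted B T lam x p eps" "eps \<noteq> 0" "k \<le> p"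
  shows "antidiagonal_gram (kform B T lam k) (cycle_vec T lam x p) p k eps"
proof -
  have Up: "(shiftop T lam ^^ p) x = 0" using assms(3) unfolding generates_cycle_def by blast
  have adapted: "B (cycle_vec T lam x p a) (cycle_vec T lam x p b) = (if a + b = p + 1 then eps else 0)"
    if "a \<in> {1..p}" "b \<in> {1..p}" for a b
    using assms(4) that unfolding cycle_adapted_def by blast
  have "\<exists>w. B (cycle_vec T lam x p i) w \<noteq> 0 \<and>
      (\<forall>j\<in>{1..p}. j \<noteq> i \<longrightarrow> B (cycle_vec T lam x p j) w = 0)" if i: "i \<in> {1..p}" for i
  proof -
    have partner: "p + 1 - i \<in> {1..p}" using i by auto
    show ?thesis
      using adapted[OF i partner] adapted[OF _ partner] i assms(5)
      by (intro exI[of _ "cycle_vec T lam x p (p + 1 - i)"]) auto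
  qed
  then have "inj_on (cycle_vec T lam x p) {1..p}" "vec.independent (cycle_vec T lam x p ` {1..p})"
    using separated_family_independent[OF symmetric_bilinear_scalar_product[OF assms(1)] finite_atLeastAtMost]
    by blast+
  then show ?thesis
    by (intro antidiagonal_gram.intro symmetric_bilinear_kform kform_cycle_vec assms Up)
qed

theorem mainTheorem7:
  shows
  "(\<forall>(B :: real^'n \<Rightarrow> real^'n \<Rightarrow> real) T lam x p eps.
      is_scalar_product B \<and> self_adjoint B T \<and> is_eigenvalue T lam \<and>
      generates_cycle T lam x p \<and> eps \<in> {1, -1} \<and> cycle_adapted B T lam x p eps \<longrightarrow>
      (\<forall>k<p. \<forall>D. diagonal_rep (kform B T lam k) (cycle_span T lam x p) D \<longrightarrow>
         zero_entries (kform B T lam k) D = k \<and>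
         neg_entries (kform B T lam k) D =
           (if eps = -1 then (p - k + 1) div 2 else (p - k) - (p - k + 1) div 2)))
   \<and>
   (\<forall>(B :: complex^'m \<Rightarrow> complex^'m \<Rightarrow> complex) T lam x p eps.
      is_scalar_product B \<and> self_adjoint B T \<and> is_eigenvalue T lam \<and>
      generates_cycle T lam x p \<and> eps \<in> {1, -1} \<and> (lam \<notin> \<real> \<longrightarrow> eps = 1) \<and>
      cycle_adapted B T lam x p eps \<longrightarrow>
      (\<forall>k<p. \<forall>D. diagonal_rep (kform B T lam k) (cycle_span T lam x p) D \<longrightarrow>
         zero_entries (kform B T lam k) D = k))"
proof (intro conjI allI impI)
  fix B :: "real^'n \<Rightarrow> real^'n \<Rightarrow> real" and T lam x p eps k D
  assume hyps: "is_scalar_product B \<and> self_adjoint B T \<and> is_eigenvalue T lam \<and>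
      generates_cycle T lam x p \<and> eps \<in> {1, -1} \<and> cycle_adapted B T lam x p eps"
    and "k < p" and diag: "diagonal_rep (kform B T lam k) (cycle_span T lam x p) D"
  then interpret real_antidiagonal_gram "kform B T lam k" "cycle_vec T lam x p" p k eps
    by (intro real_antidiagonal_gram.intro cycle_antidiagonal_gram) auto
  show "zero_entries (kform B T lam k) D = k"
    using zero_entries_diagonal_rep diag unfolding cycle_span_def .
  show "neg_entries (kform B T lam k) D =
      (if eps = -1 then (p - k + 1) div 2 else (p - k) - (p - k + 1) div 2)"
    using neg_entries_diagonal_rep diag hyps unfolding cycle_span_def by auto
next
  fix B :: "complex^'m \<Rightarrow> complex^'m \<Rightarrow> complex" and T lam x p eps k D
  assume "is_scalar_product B \<and> self_adjoint B T \<and> is_eigenvalue T lam \<and>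
      generates_cycle T lam x p \<and> eps \<in> {1, -1} \<and> (lam \<notin> \<real> \<longrightarrow> eps = 1) \<and>
      cycle_adapted B T lam x p eps"
    and "k < p" and diag: "diagonal_rep (kform B T lam k) (cycle_span T lam x p) D"
  then interpret antidiagonal_gram "kform B T lam k" "cycle_vec T lam x p" p k eps
    by (intro cycle_antidiagonal_gram) auto
  show "zero_entries (kform B T lam k) D = k"
    using zero_entries_diagonal_rep diag unfolding cycle_span_def .
qed

end
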